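(* Let $c>0$, $\lambda>0$ and define, for $t>0$ and $|x|<ct$, $$p(x,t)=\frac{\lambda\, I_0\!\left(\frac{\lambda}{c}\sqrt{c^2t^2-x^2}\right)}{2c\,\sinh \lambda t}.$$ Then for each $t>0$, $p(\cdot,t)$ is a probability density on $(-ct,ct)$ (i.e. $\int_{-ct}^{ct}p(x,t)\,dx=1$), and $p$ satisfies $$\frac{\partial^2 p}{\partial t^2}+2\lambda\coth(\lambda t)\,\frac{\partial p}{\partial t}= c^2 \frac{\partial^2 p}{\partial x^2}\qquad (t>0,\ |x|<ct).$$
   Context: $I_0(z)=\sum_{k\ge0}\frac{(z/2)^{2k}}{(k!)^2}$ is the modified Bessel function of the first kind of order $0$. *)

theory Defs
  imports "HOL-Analysis.Analysis"
begin

definition bessel_I0 :: "real \<Rightarrow> real" where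
  "bessel_I0 z = (\<Sum>k. (z / 2) ^ (2 * k) / (fact k) ^ 2)"

definition tel_density :: "real \<Rightarrow> real \<Rightarrow> real \<Rightarrow> real \<Rightarrow> real" where
  "tel_density c lam x t =
     lam * bessel_I0 ((lam / c) * sqrt (c\<^sup>2 * t\<^sup>2 - x\<^sup>2)) / (2 * c * sinh (lam * t))"

end

theory Submission
  imports Defs
begin

text \<open>
  Write \<open>I\<^sub>0(z) = G((z/2)\<^sup>2)\<close> with \<open>G(u) = \<Sum> u\<^sup>n / (n!)\<^sup>2\<close>, so that
  \<open>p = \<lambda> G(u) / (2 c sinh(\<lambda> t))\<close> with \<open>u = \<lambda>\<^sup>2 (c\<^sup>2 t\<^sup>2 - x\<^sup>2) / (4 c\<^sup>2)\<close>.
  Normalisation: integrating \<open>G(u)\<close> termwise, the moments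
  \<open>\<integral>\<^bsub>-A\<^esub>\<^sup>A (A\<^sup>2 - x\<^sup>2)\<^sup>n dx = A\<^sup>2\<^sup>n\<^sup>+\<^sup>1 2\<^sup>2\<^sup>n\<^sup>+\<^sup>1 (n!)\<^sup>2 / (2n+1)!\<close> (integration by parts)
  turn the series into the odd part of the exponential series, i.e. \<open>(2c/\<lambda>) sinh(\<lambda> t)\<close>.
  Telegraph equation: \<open>G\<close> solves \<open>u G'' + G' = G\<close>, hence \<open>w = G(u)\<close> solves the Klein--Gordon
  equation \<open>w\<^sub>t\<^sub>t - c\<^sup>2 w\<^sub>x\<^sub>x = \<lambda>\<^sup>2 w\<close>; dividing by \<open>sinh(\<lambda> t)\<close>, whose second derivative is
  \<open>\<lambda>\<^sup>2 sinh(\<lambda> t)\<close>, turns it into \<open>p\<^sub>t\<^sub>t + 2 \<lambda> coth(\<lambda> t) p\<^sub>t = c\<^sup>2 p\<^sub>x\<^sub>x\<close>.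
\<close>

section \<open>The power series of \<open>I\<^sub>0\<close>\<close>

definition power_series :: "(nat \<Rightarrow> real) \<Rightarrow> real \<Rightarrow> real" where
  "power_series a z = (\<Sum>n. a n * z ^ n)"

lemma power_series_has_real_derivative:
  assumes "\<And>z. summable (\<lambda>n. a n * z ^ n)"
  shows "(power_series a has_real_derivative power_series (diffs a) z) (at z)"
  unfolding power_series_def[abs_def] using termdiffs_strong_converges_everywhere[OF assms] .

lemma power_series_ode:
  assumes summable: "\<And>z. summable (\<lambda>n. a n * z ^ n)"
    and coeff: "\<And>n. real (Suc n) * diffs a n = a n"
  shows "power_series a z = power_series (diffs a) z + z * power_series (diffs (diffs a)) z"
proof -
  define f where "f n = real n * diffs a n * z ^ n" for n
  have summable2: "summable (\<lambda>n. diffs (diffs a) n * z ^ n)"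
    by (intro termdiff_converges_all summable)
  have "(\<lambda>n. z * (diffs (diffs a) n * z ^ n)) sums (z * power_series (diffs (diffs a)) z)"
    unfolding power_series_def by (intro sums_mult summable_sums summable2)
  moreover have "(\<lambda>n. z * (diffs (diffs a) n * z ^ n)) = (\<lambda>n. f (Suc n))"
    by (auto simp: f_def diffs_def)
  ultimately have "f sums (z * power_series (diffs (diffs a)) z + f 0)"
    by (simp add: sums_Suc_iff)
  then have "f sums (z * power_series (diffs (diffs a)) z)"
    by (simp add: f_def)
  moreover have "(\<lambda>n. diffs a n * z ^ n) sums power_series (diffs a) z"
    unfolding power_series_def by (intro summable_sums termdiff_converges_all summable)
  ultimately have "(\<lambda>n. diffs a n * z ^ n + f n) sums
      (power_series (diffs a) z + z * power_series (diffs (diffs a)) z)"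
    by (intro sums_add)
  moreover have "diffs a n * z ^ n + f n = a n * z ^ n" for n
  proof -
    have "diffs a n * z ^ n + f n = (real (Suc n) * diffs a n) * z ^ n"
      by (simp add: f_def algebra_simps)
    then show ?thesis
      by (simp only: coeff)
  qed
  ultimately show ?thesis
    unfolding power_series_def by (simp add: sums_iff)
qed

definition i0_coeff :: "nat \<Rightarrow> real" where
  "i0_coeff n = inverse ((fact n)\<^sup>2)"

lemma summable_i0_coeff: "summable (\<lambda>n. i0_coeff n * z ^ n)"
proof (rule summable_comparison_test')
  show "summable (\<lambda>n. \<bar>z\<bar> ^ n / fact n)"
    using summable_exp[of "\<bar>z\<bar>"] by (simp add: divide_inverse mult.commute)
  fix n :: nat
  have "inverse ((fact n)\<^sup>2) \<le> inverse (fact n :: real)"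
    by (intro le_imp_inverse_le) (auto simp: power2_eq_square)
  then have "inverse ((fact n)\<^sup>2) * \<bar>z\<bar> ^ n \<le> inverse (fact n) * \<bar>z\<bar> ^ n"
    by (rule mult_right_mono) simp
  then show "norm (i0_coeff n * z ^ n) \<le> \<bar>z\<bar> ^ n / fact n"
    by (simp add: i0_coeff_def abs_mult power_abs divide_inverse mult.commute)
qed

lemma diffs_i0_coeff: "real (Suc n) * diffs i0_coeff n = i0_coeff n"
proof -
  have "fact (Suc n) = real (Suc n) * fact n"
    by simp
  then show ?thesis
    by (simp add: diffs_def i0_coeff_def power2_eq_square field_simps del: fact_Suc of_nat_Suc)
qed

lemma i0_series_ode:
  "power_series i0_coeff z =
     power_series (diffs i0_coeff) z + z * power_series (diffs (diffs i0_coeff)) z"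
  by (rule power_series_ode[OF summable_i0_coeff diffs_i0_coeff])

lemma bessel_I0_eq_power_series: "bessel_I0 z = power_series i0_coeff ((z / 2)\<^sup>2)"
proof -
  have "(z / 2) ^ (2 * k) / (fact k)\<^sup>2 = i0_coeff k * ((z / 2)\<^sup>2) ^ k" for k
    unfolding i0_coeff_def by (subst power_mult) (simp only: divide_inverse mult.commute)
  then show ?thesis
    unfolding bessel_I0_def power_series_def by simp
qed

section \<open>Normalisation\<close>

lemma has_integral_square_diff_power_by_parts:
  fixes A :: real
  assumes A: "A \<ge> 0"
  shows "((\<lambda>x. (A\<^sup>2 - x\<^sup>2) ^ Suc n - 2 * real (Suc n) * x\<^sup>2 * (A\<^sup>2 - x\<^sup>2) ^ n)
           has_integral 0) {-A..A}"
proof -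
  have "((\<lambda>x. (A\<^sup>2 - x\<^sup>2) ^ Suc n - 2 * real (Suc n) * x\<^sup>2 * (A\<^sup>2 - x\<^sup>2) ^ n) has_integral
          A * (A\<^sup>2 - A\<^sup>2) ^ Suc n - (-A) * (A\<^sup>2 - (-A)\<^sup>2) ^ Suc n) {-A..A}"
  proof (rule fundamental_theorem_of_calculus)
    fix x :: real
    have "((\<lambda>x. (A\<^sup>2 - x\<^sup>2) ^ Suc n) has_real_derivative
           real (Suc n) * (A\<^sup>2 - x\<^sup>2) ^ n * (- (2 * x))) (at x within {-A..A})"
    proof -
      have "((\<lambda>x. A\<^sup>2 - x\<^sup>2) has_real_derivative - (2 * x)) (at x within {-A..A})"
        by (auto intro!: derivative_eq_intros)
      from DERIV_power[OF this, of "Suc n"] show ?thesis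
        by (simp add: ac_simps)
    qed
    from DERIV_mult[OF DERIV_ident this]
    have "((\<lambda>x. x * (A\<^sup>2 - x\<^sup>2) ^ Suc n) has_real_derivative
           (A\<^sup>2 - x\<^sup>2) ^ Suc n - 2 * real (Suc n) * x\<^sup>2 * (A\<^sup>2 - x\<^sup>2) ^ n) (at x within {-A..A})"
      by (rule DERIV_cong) (simp add: power2_eq_square algebra_simps)
    then show "((\<lambda>x. x * (A\<^sup>2 - x\<^sup>2) ^ Suc n) has_vector_derivative
           (A\<^sup>2 - x\<^sup>2) ^ Suc n - 2 * real (Suc n) * x\<^sup>2 * (A\<^sup>2 - x\<^sup>2) ^ n) (at x within {-A..A})"
      by (simp add: has_real_derivative_iff_has_vector_derivative)
  qed (use A in simp)
  then show ?thesis
    by simp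
qed

lemma has_integral_square_diff_power_Suc:
  fixes A I :: real
  assumes A: "A \<ge> 0" and I: "((\<lambda>x. (A\<^sup>2 - x\<^sup>2) ^ n) has_integral I) {-A..A}"
  shows "((\<lambda>x. (A\<^sup>2 - x\<^sup>2) ^ Suc n) has_integral
           2 * real (Suc n) * A\<^sup>2 * I / (2 * real n + 3)) {-A..A}"
proof -
  have "((\<lambda>x. ((A\<^sup>2 - x\<^sup>2) ^ Suc n - 2 * real (Suc n) * x\<^sup>2 * (A\<^sup>2 - x\<^sup>2) ^ n)
           + 2 * real (Suc n) * A\<^sup>2 * (A\<^sup>2 - x\<^sup>2) ^ n) has_integral
          0 + 2 * real (Suc n) * A\<^sup>2 * I) {-A..A}"
    by (intro has_integral_add has_integral_square_diff_power_by_parts A has_integral_mult_right I)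
  moreover have "((A\<^sup>2 - x\<^sup>2) ^ Suc n - 2 * real (Suc n) * x\<^sup>2 * (A\<^sup>2 - x\<^sup>2) ^ n)
           + 2 * real (Suc n) * A\<^sup>2 * (A\<^sup>2 - x\<^sup>2) ^ n
         = (2 * real n + 3) * (A\<^sup>2 - x\<^sup>2) ^ Suc n" for x
    by (simp add: algebra_simps power2_eq_square)
  ultimately have "((\<lambda>x. (2 * real n + 3) * (A\<^sup>2 - x\<^sup>2) ^ Suc n) has_integral
      2 * real (Suc n) * A\<^sup>2 * I) {-A..A}"
    by simp
  then show ?thesis
    by (subst (asm) has_integral_mult_right_iff) auto
qed

lemma has_integral_square_diff_power:
  fixes A :: real
  assumes A: "A \<ge> 0"
  shows "((\<lambda>x. (A\<^sup>2 - x\<^sup>2) ^ n) has_integral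
           A ^ (2 * n + 1) * 2 ^ (2 * n + 1) * (fact n)\<^sup>2 / fact (2 * n + 1)) {-A..A}"
proof (induction n)
  case 0
  show ?case
    using A has_integral_const_real[of "1::real" "-A" A] by (simp add: mult.commute real_scaleR_def)
next
  case (Suc n)
  have "2 * real (Suc n) * A\<^sup>2 * (A ^ (2 * n + 1) * 2 ^ (2 * n + 1) * (fact n)\<^sup>2 / fact (2 * n + 1))
          / (2 * real n + 3)
        = A ^ (2 * Suc n + 1) * 2 ^ (2 * Suc n + 1) * (fact (Suc n))\<^sup>2 / fact (2 * Suc n + 1)"
  proof -
    have pow: "A ^ (2 * Suc n + 1) * 2 ^ (2 * Suc n + 1) = A ^ (2 * n + 1) * 2 ^ (2 * n + 1) * (4 * A\<^sup>2)"
      by (simp add: power2_eq_square algebra_simps)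
    have fact_odd: "fact (2 * Suc n + 1) = (2 * real n + 3) * (2 * real n + 2) * (fact (2 * n + 1) :: real)"
      by (simp add: algebra_simps)
    have fact_Suc: "(fact (Suc n) :: real) = real (Suc n) * fact n"
      by simp
    have alg: "2 * s * A\<^sup>2 * (P * F\<^sup>2 / G) / (2 * m + 3)
        = P * (4 * A\<^sup>2) * (s * F)\<^sup>2 / ((2 * m + 3) * (2 * m + 2) * G)"
      if "G > 0" "m \<ge> 0" "s = m + 1" for m s P F G :: real
    proof -
      have "G \<noteq> 0" "2 * m + 3 \<noteq> 0" "2 * m + 2 \<noteq> 0"
        using that by auto
      with \<open>s = m + 1\<close> show ?thesis
        by (simp add: divide_simps) (simp add: algebra_simps power2_eq_square)
    qed
    show ?thesis
      unfolding pow fact_odd fact_Suc by (rule alg) simp_all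
  qed
  with has_integral_square_diff_power_Suc[OF A Suc.IH] show ?case
    by simp
qed

lemma sinh_odd_series: "(\<lambda>n. z ^ (2 * n + 1) / fact (2 * n + 1)) sums sinh (z :: real)"
proof -
  have "(\<lambda>n. if even n then 0 else z ^ n /\<^sub>R fact n) sums sinh z"
    by (rule sinh_converges)
  also have "?this \<longleftrightarrow> (\<lambda>n. z ^ (2 * n + 1) / fact (2 * n + 1)) sums sinh z"
    by (subst sums_mono_reindex[of "\<lambda>n. 2 * n + 1", symmetric])
       (auto simp: strict_mono_def divide_inverse mult.commute elim!: oddE)
  finally show ?thesis .
qed

lemma has_integral_power_series_comp:
  fixes a :: "nat \<Rightarrow> real" and u :: "real \<Rightarrow> real"
  assumes summable: "\<And>z. summable (\<lambda>n. a n * z ^ n)"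
    and a_nonneg: "\<And>n. a n \<ge> 0" and u_nonneg: "\<And>x. x \<in> S \<Longrightarrow> u x \<ge> 0"
    and moments: "\<And>n. ((\<lambda>x. u x ^ n) has_integral I n) S"
    and sums: "(\<lambda>n. a n * I n) sums L"
  shows "((\<lambda>x. power_series a (u x)) has_integral L) S"
proof -
  define f where "f k x = (\<Sum>n<k. a n * u x ^ n)" for k x
  have f_integral: "(f k has_integral (\<Sum>n<k. a n * I n)) S" for k
    unfolding f_def by (intro has_integral_sum has_integral_mult_right moments) auto
  then have "integral S (f k) = (\<Sum>n<k. a n * I n)" for k
    by (rule integral_unique)
  then have lim: "(\<lambda>k. integral S (f k)) \<longlonglongrightarrow> L"
    using sums by (simp add: sums_def)
  have "(\<lambda>x. power_series a (u x)) integrable_on S \<and>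
      (\<lambda>k. integral S (f k)) \<longlonglongrightarrow> integral S (\<lambda>x. power_series a (u x))"
  proof (rule monotone_convergence_increasing)
    show "f k integrable_on S" for k
      using f_integral by blast
    show "f k x \<le> f (Suc k) x" if "x \<in> S" for k x
      unfolding f_def using a_nonneg u_nonneg[OF that] by simp
    show "(\<lambda>k. f k x) \<longlonglongrightarrow> power_series a (u x)" for x
      unfolding f_def power_series_def by (rule summable_LIMSEQ) (rule summable)
    show "bounded (range (\<lambda>k. integral S (f k)))"
      using lim by (rule convergent_imp_bounded)
  qed
  moreover from this have "integral S (\<lambda>x. power_series a (u x)) = L"
    using lim LIMSEQ_unique by blast
  ultimately show ?thesis
    using integrable_integral by fastforce
qed

lemma tel_density_eq_power_series:
  assumes "c > 0" and "x\<^sup>2 \<le> c\<^sup>2 * t\<^sup>2"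
  shows "tel_density c lam x t =
           lam / (2 * c) * power_series i0_coeff (lam\<^sup>2 / (4 * c\<^sup>2) * (c\<^sup>2 * t\<^sup>2 - x\<^sup>2)) / sinh (lam * t)"
proof -
  have "((lam / c) * sqrt (c\<^sup>2 * t\<^sup>2 - x\<^sup>2) / 2)\<^sup>2 = lam\<^sup>2 / (4 * c\<^sup>2) * (c\<^sup>2 * t\<^sup>2 - x\<^sup>2)"
    using assms by (simp add: power_mult_distrib power_divide)
  then show ?thesis
    unfolding tel_density_def bessel_I0_eq_power_series by simp
qed

lemma i0_coeff_moments_sums_sinh:
  fixes c lam t :: real
  assumes c: "c > 0" and lam: "lam > 0"
  shows "(\<lambda>n. i0_coeff n * ((lam\<^sup>2 / (4 * c\<^sup>2)) ^ n *
           ((c * t) ^ (2 * n + 1) * 2 ^ (2 * n + 1) * (fact n)\<^sup>2 / fact (2 * n + 1))))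
         sums (2 * c / lam * sinh (lam * t))"
proof -
  define k where "k = lam\<^sup>2 / (4 * c\<^sup>2)"
  have "i0_coeff n * (k ^ n * ((c * t) ^ (2 * n + 1) * 2 ^ (2 * n + 1) * (fact n)\<^sup>2 / fact (2 * n + 1)))
        = 2 * c / lam * ((lam * t) ^ (2 * n + 1) / fact (2 * n + 1))" for n
  proof -
    have "k ^ n = lam ^ (2 * n) / (2 ^ (2 * n) * c ^ (2 * n))"
      by (simp add: k_def power_divide power_mult_distrib power_mult)
    moreover have "(c * t) ^ (2 * n + 1) = c ^ (2 * n) * c * t ^ (2 * n + 1)"
      and "(lam * t) ^ (2 * n + 1) = lam ^ (2 * n) * lam * t ^ (2 * n + 1)"
      and "(2 :: real) ^ (2 * n + 1) = 2 ^ (2 * n) * 2"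
      by (simp_all add: power_mult_distrib)
    ultimately show ?thesis
      using c lam by (simp add: i0_coeff_def field_simps power2_eq_square)
  qed
  then show ?thesis
    unfolding k_def[symmetric] by (simp only:) (intro sums_mult sinh_odd_series)
qed

lemma tel_density_has_integral:
  assumes c: "c > 0" and lam: "lam > 0" and t: "t > 0"
  shows "((\<lambda>x. tel_density c lam x t) has_integral 1) {-c*t..c*t}"
proof -
  define k where "k = lam\<^sup>2 / (4 * c\<^sup>2)"
  define J where "J n = (c * t) ^ (2 * n + 1) * 2 ^ (2 * n + 1) * (fact n)\<^sup>2 / fact (2 * n + 1)" for n
  have "((\<lambda>x. (k * ((c * t)\<^sup>2 - x\<^sup>2)) ^ n) has_integral k ^ n * J n) {-(c*t)..c*t}" for n
    unfolding power_mult_distrib[of k] J_def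
    by (intro has_integral_mult_right has_integral_square_diff_power) (use c t in simp)
  moreover have "(\<lambda>n. i0_coeff n * (k ^ n * J n)) sums (2 * c / lam * sinh (lam * t))"
    unfolding k_def J_def using c lam by (rule i0_coeff_moments_sums_sinh)
  moreover have "k * ((c * t)\<^sup>2 - x\<^sup>2) \<ge> 0" if "x \<in> {-(c*t)..c*t}" for x
    using that c t by (auto simp: k_def abs_le_square_iff[symmetric])
  ultimately have "((\<lambda>x. power_series i0_coeff (k * ((c * t)\<^sup>2 - x\<^sup>2))) has_integral
      2 * c / lam * sinh (lam * t)) {-(c*t)..c*t}"
    by (intro has_integral_power_series_comp summable_i0_coeff) (auto simp: i0_coeff_def)
  then have "((\<lambda>x. lam / (2 * c * sinh (lam * t)) * power_series i0_coeff (k * ((c * t)\<^sup>2 - x\<^sup>2)))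
      has_integral lam / (2 * c * sinh (lam * t)) * (2 * c / lam * sinh (lam * t))) {-(c*t)..c*t}"
    by (rule has_integral_mult_right)
  moreover have "lam / (2 * c * sinh (lam * t)) * (2 * c / lam * sinh (lam * t)) = 1"
    using c lam t by (simp add: field_simps)
  ultimately have "((\<lambda>x. lam / (2 * c * sinh (lam * t)) * power_series i0_coeff (k * ((c * t)\<^sup>2 - x\<^sup>2)))
      has_integral 1) {-(c*t)..c*t}"
    by simp
  then show ?thesis
    unfolding minus_mult_left[symmetric]
  proof (rule has_integral_eq[rotated])
    fix x assume "x \<in> {-(c*t)..c*t}"
    then have "\<bar>x\<bar> \<le> \<bar>c * t\<bar>"
      using c t by auto
    then have "x\<^sup>2 \<le> c\<^sup>2 * t\<^sup>2"
      by (simp add: abs_le_square_iff power_mult_distrib)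
    then show "lam / (2 * c * sinh (lam * t)) * power_series i0_coeff (k * ((c * t)\<^sup>2 - x\<^sup>2))
        = tel_density c lam x t"
      using tel_density_eq_power_series[OF c] by (simp add: k_def power_mult_distrib)
  qed
qed

section \<open>The telegraph equation\<close>

lemma has_real_derivative_comp_quadratic:
  assumes "\<And>z. (G has_real_derivative G' z) (at z)"
  shows "((\<lambda>s. G (a * s\<^sup>2 + b)) has_real_derivative G' (a * s\<^sup>2 + b) * (2 * a * s)) (at s)"
proof -
  have "((\<lambda>s. a * s\<^sup>2 + b) has_real_derivative 2 * a * s) (at s)"
    by (auto intro!: derivative_eq_intros)
  with assms show ?thesis
    by (rule DERIV_chain2)
qed

lemma has_real_derivative_comp_quadratic':
  assumes "\<And>z. (G' has_real_derivative G'' z) (at z)"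
  shows "((\<lambda>s. G' (a * s\<^sup>2 + b) * (2 * a * s)) has_real_derivative
           G'' (a * s\<^sup>2 + b) * (2 * a * s)\<^sup>2 + 2 * a * G' (a * s\<^sup>2 + b)) (at s)"
proof -
  have "((\<lambda>s. 2 * a * s) has_real_derivative 2 * a) (at s)"
    by (auto intro!: derivative_eq_intros)
  from DERIV_mult[OF has_real_derivative_comp_quadratic[OF assms, of a b s] this] show ?thesis
    by (rule DERIV_cong) (simp add: power2_eq_square algebra_simps)
qed

lemma has_real_derivative_div_sinh:
  fixes q q' q'' :: "real \<Rightarrow> real"
  assumes q: "\<And>s. (q has_real_derivative q' s) (at s)"
    and q': "\<And>s. (q' has_real_derivative q'' s) (at s)"
    and t: "sinh (lam * t) \<noteq> 0"
  defines "p' s \<equiv> q' s / sinh (lam * s) - lam * cosh (lam * s) * q s / (sinh (lam * s))\<^sup>2"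
  shows "\<forall>\<^sub>F s in nhds t. ((\<lambda>r. q r / sinh (lam * r)) has_real_derivative p' s) (at s)"
    and "(p' has_real_derivative
           (q'' t - lam\<^sup>2 * q t) / sinh (lam * t) - 2 * lam * (cosh (lam * t) / sinh (lam * t)) * p' t) (at t)"
proof -
  have "open {s. sinh (lam * s) \<noteq> 0}"
    by (intro open_Collect_neq continuous_intros)
  from eventually_nhds_in_open[OF this] t have "\<forall>\<^sub>F s in nhds t. sinh (lam * s) \<noteq> 0"
    by simp
  then show "\<forall>\<^sub>F s in nhds t. ((\<lambda>r. q r / sinh (lam * r)) has_real_derivative p' s) (at s)"
    by eventually_elim
       (auto intro!: derivative_eq_intros q simp: p'_def field_simps power2_eq_square)
  show "(p' has_real_derivative
           (q'' t - lam\<^sup>2 * q t) / sinh (lam * t) - 2 * lam * (cosh (lam * t) / sinh (lam * t)) * p' t) (at t)"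
    unfolding p'_def using t
    by (auto intro!: derivative_eq_intros q q' simp: field_simps power2_eq_square power3_eq_cube)
qed

lemma deriv_deriv_eventually_eq:
  fixes f g g' :: "real \<Rightarrow> real"
  assumes fg: "\<forall>\<^sub>F s in nhds t. f s = g s"
    and g: "\<forall>\<^sub>F s in nhds t. (g has_real_derivative g' s) (at s)"
    and g': "(g' has_real_derivative g'') (at t)"
  shows "f differentiable (at t)" and "deriv f differentiable (at t)"
    and "deriv f t = g' t" and "deriv (deriv f) t = g''"
proof -
  have "\<forall>\<^sub>F s in nhds t. \<forall>\<^sub>F r in nhds s. f r = g r"
    using fg by (simp add: eventually_eventually)
  with g have f: "\<forall>\<^sub>F s in nhds t. (f has_real_derivative g' s) (at s)"
    by eventually_elim (simp add: DERIV_cong_ev)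
  then have "\<forall>\<^sub>F s in nhds t. deriv f s = g' s"
    by eventually_elim (rule DERIV_imp_deriv)
  with g' have f': "(deriv f has_real_derivative g'') (at t)"
    by (simp add: DERIV_cong_ev)
  from f have "(f has_real_derivative g' t) (at t)"
    by (rule eventually_nhds_x_imp_x)
  with f' show "f differentiable (at t)" "deriv f differentiable (at t)"
    and "deriv f t = g' t" "deriv (deriv f) t = g''"
    by (auto simp: real_differentiable_def DERIV_imp_deriv)
qed

lemma tel_density_eventually_eq:
  fixes c lam x t :: real
  assumes c: "c > 0" and x: "x\<^sup>2 < c\<^sup>2 * t\<^sup>2"
  defines "k \<equiv> lam\<^sup>2 / (4 * c\<^sup>2)"
  shows "\<forall>\<^sub>F s in nhds t. tel_density c lam x s =
           lam / (2 * c) * power_series i0_coeff (k * c\<^sup>2 * s\<^sup>2 + - k * x\<^sup>2) / sinh (lam * s)"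
    and "\<forall>\<^sub>F y in nhds x. tel_density c lam y t =
           lam / (2 * c) * power_series i0_coeff (- k * y\<^sup>2 + k * c\<^sup>2 * t\<^sup>2) / sinh (lam * t)"
proof -
  have "open {s. x\<^sup>2 < c\<^sup>2 * s\<^sup>2}" and "open {y. y\<^sup>2 < c\<^sup>2 * t\<^sup>2}"
    by (intro open_Collect_less continuous_intros)+
  with x have "\<forall>\<^sub>F s in nhds t. x\<^sup>2 < c\<^sup>2 * s\<^sup>2" and "\<forall>\<^sub>F y in nhds x. y\<^sup>2 < c\<^sup>2 * t\<^sup>2"
    using eventually_nhds_in_open by fastforce+
  moreover have "k * (c\<^sup>2 * s\<^sup>2 - y\<^sup>2) = k * c\<^sup>2 * s\<^sup>2 + - k * y\<^sup>2"
    and "k * (c\<^sup>2 * s\<^sup>2 - y\<^sup>2) = - k * y\<^sup>2 + k * c\<^sup>2 * s\<^sup>2" for s y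
    by (simp_all add: algebra_simps)
  ultimately show "\<forall>\<^sub>F s in nhds t. tel_density c lam x s =
           lam / (2 * c) * power_series i0_coeff (k * c\<^sup>2 * s\<^sup>2 + - k * x\<^sup>2) / sinh (lam * s)"
    and "\<forall>\<^sub>F y in nhds x. tel_density c lam y t =
           lam / (2 * c) * power_series i0_coeff (- k * y\<^sup>2 + k * c\<^sup>2 * t\<^sup>2) / sinh (lam * t)"
    by (auto elim!: eventually_mono simp: tel_density_eq_power_series[OF c] k_def)
qed

lemma tel_density_time_derivatives:
  fixes c lam x t :: real
  assumes c: "c > 0" and lam: "lam > 0" and t: "t > 0" and x: "x\<^sup>2 < c\<^sup>2 * t\<^sup>2"
  defines "k \<equiv> lam\<^sup>2 / (4 * c\<^sup>2)"
  defines "u \<equiv> k * (c\<^sup>2 * t\<^sup>2 - x\<^sup>2)"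
  shows "(\<lambda>s. tel_density c lam x s) differentiable (at t)"
    and "(\<lambda>s. deriv (\<lambda>r. tel_density c lam x r) s) differentiable (at t)"
    and "deriv (\<lambda>s. deriv (\<lambda>r. tel_density c lam x r) s) t
           + 2 * lam * (cosh (lam * t) / sinh (lam * t)) * deriv (\<lambda>r. tel_density c lam x r) t
         = lam / (2 * c) * (power_series (diffs (diffs i0_coeff)) u * (2 * (k * c\<^sup>2) * t)\<^sup>2
             + 2 * (k * c\<^sup>2) * power_series (diffs i0_coeff) u - lam\<^sup>2 * power_series i0_coeff u)
           / sinh (lam * t)"
proof -
  define q where "q s = lam / (2 * c) * power_series i0_coeff (k * c\<^sup>2 * s\<^sup>2 + - k * x\<^sup>2)" for s
  define q' where "q' s = lam / (2 * c) *
      (power_series (diffs i0_coeff) (k * c\<^sup>2 * s\<^sup>2 + - k * x\<^sup>2) * (2 * (k * c\<^sup>2) * s))" for s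
  define q'' where "q'' s = lam / (2 * c) *
      (power_series (diffs (diffs i0_coeff)) (k * c\<^sup>2 * s\<^sup>2 + - k * x\<^sup>2) * (2 * (k * c\<^sup>2) * s)\<^sup>2
       + 2 * (k * c\<^sup>2) * power_series (diffs i0_coeff) (k * c\<^sup>2 * s\<^sup>2 + - k * x\<^sup>2))" for s
  have dq: "(q has_real_derivative q' s) (at s)" for s
    unfolding q_def[abs_def] q'_def
    by (intro DERIV_cmult has_real_derivative_comp_quadratic power_series_has_real_derivative
          summable_i0_coeff)
  have dq': "(q' has_real_derivative q'' s) (at s)" for s
    unfolding q'_def[abs_def] q''_def
    by (intro DERIV_cmult has_real_derivative_comp_quadratic' power_series_has_real_derivative
          termdiff_converges_all summable_i0_coeff)
  have near: "\<forall>\<^sub>F s in nhds t. tel_density c lam x s = q s / sinh (lam * s)"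
    using tel_density_eventually_eq(1)[OF c x, of lam] by (simp add: q_def k_def)
  have "sinh (lam * t) \<noteq> 0"
    using lam t by simp
  note derivs = deriv_deriv_eventually_eq[OF near has_real_derivative_div_sinh[OF dq dq' this]]
  show "(\<lambda>s. tel_density c lam x s) differentiable (at t)"
    and "(\<lambda>s. deriv (\<lambda>r. tel_density c lam x r) s) differentiable (at t)"
    using derivs(1,2) by simp_all
  have "k * c\<^sup>2 * t\<^sup>2 + - k * x\<^sup>2 = u"
    by (simp add: u_def algebra_simps)
  then show "deriv (\<lambda>s. deriv (\<lambda>r. tel_density c lam x r) s) t
           + 2 * lam * (cosh (lam * t) / sinh (lam * t)) * deriv (\<lambda>r. tel_density c lam x r) t
         = lam / (2 * c) * (power_series (diffs (diffs i0_coeff)) u * (2 * (k * c\<^sup>2) * t)\<^sup>2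
             + 2 * (k * c\<^sup>2) * power_series (diffs i0_coeff) u - lam\<^sup>2 * power_series i0_coeff u)
           / sinh (lam * t)"
    unfolding derivs(3,4) by (simp add: q_def q''_def diff_divide_distrib right_diff_distrib)
qed

lemma tel_density_space_derivatives:
  fixes c lam x t :: real
  assumes c: "c > 0" and x: "x\<^sup>2 < c\<^sup>2 * t\<^sup>2"
  defines "k \<equiv> lam\<^sup>2 / (4 * c\<^sup>2)"
  defines "u \<equiv> k * (c\<^sup>2 * t\<^sup>2 - x\<^sup>2)"
  shows "(\<lambda>y. tel_density c lam y t) differentiable (at x)"
    and "(\<lambda>y. deriv (\<lambda>z. tel_density c lam z t) y) differentiable (at x)"
    and "deriv (\<lambda>y. deriv (\<lambda>z. tel_density c lam z t) y) x
         = lam / (2 * c) * (power_series (diffs (diffs i0_coeff)) u * (2 * - k * x)\<^sup>2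
             + 2 * - k * power_series (diffs i0_coeff) u) / sinh (lam * t)"
proof -
  define Q where "Q y = lam / (2 * c) * power_series i0_coeff (- k * y\<^sup>2 + k * c\<^sup>2 * t\<^sup>2)" for y
  define Q' where "Q' y = lam / (2 * c) *
      (power_series (diffs i0_coeff) (- k * y\<^sup>2 + k * c\<^sup>2 * t\<^sup>2) * (2 * - k * y))" for y
  define Q'' where "Q'' y = lam / (2 * c) *
      (power_series (diffs (diffs i0_coeff)) (- k * y\<^sup>2 + k * c\<^sup>2 * t\<^sup>2) * (2 * - k * y)\<^sup>2
       + 2 * - k * power_series (diffs i0_coeff) (- k * y\<^sup>2 + k * c\<^sup>2 * t\<^sup>2))" for y
  have dQ: "((\<lambda>y. Q y / sinh (lam * t)) has_real_derivative Q' y / sinh (lam * t)) (at y)" for y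
    unfolding Q_def Q'_def
    by (intro DERIV_cdivide DERIV_cmult has_real_derivative_comp_quadratic
          power_series_has_real_derivative summable_i0_coeff)
  have dQ': "((\<lambda>y. Q' y / sinh (lam * t)) has_real_derivative Q'' x / sinh (lam * t)) (at x)"
    unfolding Q'_def[abs_def] Q''_def
    by (intro DERIV_cdivide DERIV_cmult has_real_derivative_comp_quadratic'
          power_series_has_real_derivative termdiff_converges_all summable_i0_coeff)
  have near: "\<forall>\<^sub>F y in nhds x. tel_density c lam y t = Q y / sinh (lam * t)"
    using tel_density_eventually_eq(2)[OF c x, of lam] by (simp add: Q_def k_def)
  have "\<forall>\<^sub>F y in nhds x. ((\<lambda>y. Q y / sinh (lam * t)) has_real_derivative Q' y / sinh (lam * t)) (at y)"
    using dQ by (simp add: always_eventually)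
  note derivs = deriv_deriv_eventually_eq[OF near this dQ']
  show "(\<lambda>y. tel_density c lam y t) differentiable (at x)"
    and "(\<lambda>y. deriv (\<lambda>z. tel_density c lam z t) y) differentiable (at x)"
    using derivs(1,2) by simp_all
  have "- k * x\<^sup>2 + k * c\<^sup>2 * t\<^sup>2 = u"
    by (simp add: u_def algebra_simps)
  then show "deriv (\<lambda>y. deriv (\<lambda>z. tel_density c lam z t) y) x
         = lam / (2 * c) * (power_series (diffs (diffs i0_coeff)) u * (2 * - k * x)\<^sup>2
             + 2 * - k * power_series (diffs i0_coeff) u) / sinh (lam * t)"
    unfolding derivs(4) by (simp add: Q''_def)
qed

text \<open>For \<open>w(x,t) = G(k (c\<^sup>2 t\<^sup>2 - x\<^sup>2))\<close> this is \<open>w\<^sub>t\<^sub>t - c\<^sup>2 w\<^sub>x\<^sub>x = 4 k c\<^sup>2 w\<close>, with both sides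
  expanded by the chain rule; it reduces to \<open>u G'' + G' = G\<close>.\<close>

lemma i0_series_klein_gordon:
  fixes k c t x :: real
  defines "u \<equiv> k * (c\<^sup>2 * t\<^sup>2 - x\<^sup>2)"
  shows "power_series (diffs (diffs i0_coeff)) u * (2 * (k * c\<^sup>2) * t)\<^sup>2
           + 2 * (k * c\<^sup>2) * power_series (diffs i0_coeff) u - 4 * k * c\<^sup>2 * power_series i0_coeff u
         = c\<^sup>2 * (power_series (diffs (diffs i0_coeff)) u * (2 * - k * x)\<^sup>2
           + 2 * - k * power_series (diffs i0_coeff) u)"
  unfolding i0_series_ode[of u] by (simp add: u_def power2_eq_square algebra_simps)

lemma tel_density_telegraph_equation:
  fixes c lam x t :: real
  assumes c: "c > 0" and lam: "lam > 0" and t: "t > 0" and x: "x\<^sup>2 < c\<^sup>2 * t\<^sup>2"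
  shows "deriv (\<lambda>s. deriv (\<lambda>r. tel_density c lam x r) s) t
           + 2 * lam * (cosh (lam * t) / sinh (lam * t)) * deriv (\<lambda>r. tel_density c lam x r) t
         = c\<^sup>2 * deriv (\<lambda>y. deriv (\<lambda>z. tel_density c lam z t) y) x"
proof -
  define k where "k = lam\<^sup>2 / (4 * c\<^sup>2)"
  define u where "u = k * (c\<^sup>2 * t\<^sup>2 - x\<^sup>2)"
  have "lam\<^sup>2 = 4 * k * c\<^sup>2"
    using c by (simp add: k_def)
  then have klein_gordon:
    "power_series (diffs (diffs i0_coeff)) u * (2 * (k * c\<^sup>2) * t)\<^sup>2
       + 2 * (k * c\<^sup>2) * power_series (diffs i0_coeff) u - lam\<^sup>2 * power_series i0_coeff u
     = c\<^sup>2 * (power_series (diffs (diffs i0_coeff)) u * (2 * - k * x)\<^sup>2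
       + 2 * - k * power_series (diffs i0_coeff) u)"
    using i0_series_klein_gordon[of k c t x] by (simp add: u_def)
  show ?thesis
    unfolding tel_density_time_derivatives(3)[OF c lam t x] tel_density_space_derivatives(3)[OF c x]
      k_def[symmetric] u_def[symmetric] klein_gordon
    by simp
qed

theorem mainTheorem3:
  fixes c lam :: real
  assumes "c > 0" and "lam > 0"
  shows "(\<forall>t>0. ((\<lambda>x. tel_density c lam x t) has_integral 1) {-c*t..c*t})
       \<and> (\<forall>t x. t > 0 \<and> \<bar>x\<bar> < c * t \<longrightarrow>
            (\<lambda>s. tel_density c lam x s) differentiable (at t)
          \<and> (\<lambda>s. deriv (\<lambda>r. tel_density c lam x r) s) differentiable (at t)
          \<and> (\<lambda>y. tel_density c lam y t) differentiable (at x)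
          \<and> (\<lambda>y. deriv (\<lambda>z. tel_density c lam z t) y) differentiable (at x)
          \<and> deriv (\<lambda>s. deriv (\<lambda>r. tel_density c lam x r) s) t
              + 2 * lam * (cosh (lam * t) / sinh (lam * t)) * deriv (\<lambda>r. tel_density c lam x r) t
            = c\<^sup>2 * deriv (\<lambda>y. deriv (\<lambda>z. tel_density c lam z t) y) x)"
proof (intro conjI allI impI)
  fix t :: real
  assume "t > 0"
  with assms show "((\<lambda>x. tel_density c lam x t) has_integral 1) {-c*t..c*t}"
    by (rule tel_density_has_integral)
next
  fix t x :: real
  assume "t > 0 \<and> \<bar>x\<bar> < c * t"
  then have t: "t > 0" and x: "x\<^sup>2 < c\<^sup>2 * t\<^sup>2"
    using abs_le_square_iff[of "c * t" x] assms by (auto simp: power_mult_distrib)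
  show "(\<lambda>s. tel_density c lam x s) differentiable (at t)"
    and "(\<lambda>s. deriv (\<lambda>r. tel_density c lam x r) s) differentiable (at t)"
    using tel_density_time_derivatives[OF assms t x] by simp_all
  show "(\<lambda>y. tel_density c lam y t) differentiable (at x)"
    and "(\<lambda>y. deriv (\<lambda>z. tel_density c lam z t) y) differentiable (at x)"
    using tel_density_space_derivatives[OF assms(1) x] by simp_all
  show "deriv (\<lambda>s. deriv (\<lambda>r. tel_density c lam x r) s) t
      + 2 * lam * (cosh (lam * t) / sinh (lam * t)) * deriv (\<lambda>r. tel_density c lam x r) t
    = c\<^sup>2 * deriv (\<lambda>y. deriv (\<lambda>z. tel_density c lam z t) y) x"
    using assms t x by (rule tel_density_telegraph_equation)
qed

end
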